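(* Let $H$ be a Hilbert space and $T$ a densely defined closed operator on $H$ with closed range. Then $T$ is normal (i.e. $TT^{*}=T^{*}T$) if and only if $w(T)$ is normal.
   Context: For a densely defined closed operator $A$ with closed range, $C(A)=D(A)\cap N(A)^{\perp}$, and the Moore–Penrose inverse $A^{\dagger}$ is defined on $R(A)\oplus^{\perp}R(A)^{\perp}$ by $A^{\dagger}y=(A|_{C(A)})^{-1}y$ for $y\in R(A)$ and $A^{\dagger}y=0$ for $y\in R(A)^{\perp}$. The generalized Cauchy dual is $w(A)=A(A^{*}A)^{\dagger}$ (products on natural domains). *)

theory Defs
  imports "HOL-Analysis.Analysis"
begin

text \<open>A complex Hilbert space is modelled as a real Hilbert space
  (type class real_inner + complete_space; the real inner product is the real part
  of the complex one) together with a complex structure J (multiplication by i),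
  which is real-linear, squares to minus the identity and is isometric.\<close>

definition complex_structure :: "('a::real_inner \<Rightarrow> 'a) \<Rightarrow> bool" where
  "complex_structure J \<longleftrightarrow> linear J \<and> (\<forall>x. J (J x) = - x) \<and> (\<forall>x y. inner (J x) (J y) = inner x y)"

type_synonym 'a op = "'a set \<times> ('a \<Rightarrow> 'a)"

definition dom_op :: "'a op \<Rightarrow> 'a set" where "dom_op A = fst A"
definition app_op :: "'a op \<Rightarrow> 'a \<Rightarrow> 'a" where "app_op A = snd A"

definition clinear_op :: "('a::real_inner \<Rightarrow> 'a) \<Rightarrow> 'a op \<Rightarrow> bool" where
  "clinear_op J A \<longleftrightarrow> subspace (dom_op A) \<and> (\<forall>x\<in>dom_op A. J x \<in> dom_op A)
     \<and> (\<forall>x\<in>dom_op A. \<forall>y\<in>dom_op A. app_op A (x + y) = app_op A x + app_op A y)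
     \<and> (\<forall>c. \<forall>x\<in>dom_op A. app_op A (c *\<^sub>R x) = c *\<^sub>R app_op A x)
     \<and> (\<forall>x\<in>dom_op A. app_op A (J x) = J (app_op A x))"

definition densely_defined :: "'a::real_normed_vector op \<Rightarrow> bool" where
  "densely_defined A \<longleftrightarrow> closure (dom_op A) = UNIV"

definition graph_op :: "'a op \<Rightarrow> ('a \<times> 'a) set" where
  "graph_op A = {(x, app_op A x) | x. x \<in> dom_op A}"

definition closed_op :: "'a::real_normed_vector op \<Rightarrow> bool" where
  "closed_op A \<longleftrightarrow> closed (graph_op A)"

definition range_op :: "'a op \<Rightarrow> 'a set" where
  "range_op A = app_op A ` dom_op A"

definition ker_op :: "'a::zero op \<Rightarrow> 'a set" where
  "ker_op A = {x \<in> dom_op A. app_op A x = 0}"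

definition op_eq :: "'a op \<Rightarrow> 'a op \<Rightarrow> bool" where
  "op_eq A B \<longleftrightarrow> dom_op A = dom_op B \<and> (\<forall>x\<in>dom_op A. app_op A x = app_op B x)"

definition comp_op :: "'a op \<Rightarrow> 'a op \<Rightarrow> 'a op" where
  "comp_op A B = ({x \<in> dom_op B. app_op B x \<in> dom_op A}, \<lambda>x. app_op A (app_op B x))"

text \<open>Hilbert space adjoint (for a complex-linear operator the complex adjoint coincides
  with the adjoint w.r.t. the real part of the inner product).\<close>
definition adj_op :: "'a::real_inner op \<Rightarrow> 'a op" where
  "adj_op A = ({y. \<exists>z. \<forall>x\<in>dom_op A. inner (app_op A x) y = inner x z},
               \<lambda>y. THE z. \<forall>x\<in>dom_op A. inner (app_op A x) y = inner x z)"

definition normal_op :: "'a::real_inner op \<Rightarrow> bool" where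
  "normal_op A \<longleftrightarrow> op_eq (comp_op A (adj_op A)) (comp_op (adj_op A) A)"

definition coker_dom :: "'a::real_inner op \<Rightarrow> 'a set" where
  "coker_dom A = dom_op A \<inter> orthogonal_comp (ker_op A)"

definition mp_inv :: "'a::real_inner op \<Rightarrow> 'a op" where
  "mp_inv A = ({u + v | u v. u \<in> range_op A \<and> v \<in> orthogonal_comp (range_op A)},
               \<lambda>y. THE x. x \<in> coker_dom A \<and>
                   (\<exists>u v. y = u + v \<and> u \<in> range_op A \<and> v \<in> orthogonal_comp (range_op A)
                          \<and> app_op A x = u))"

definition cauchy_dual :: "'a::real_inner op \<Rightarrow> 'a op" where
  "cauchy_dual A = comp_op A (mp_inv (comp_op (adj_op A) A))"

end

(*
  Since R(T) is closed, the Moore-Penrose inverse T^+ is everywhere defined with closed graph, hence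
  bounded by the closed graph theorem; let B = (T^+)^* be its adjoint. Then (T^* T)^+ = T^+ B, so
  w(T) = T T^+ B = B and w(T)^* = T^+: the Cauchy dual is normal iff T^+ and B commute.
  On the other side D(T^* ) = B(H) + R(T)^\<bottom> with T^* (B u + v) the component of u in N(T)^\<bottom>,
  and D(T) = T^+(H) + N(T). Normality of T as well as commutation of T^+ and B forces
  N(T) = R(T)^\<bottom>, and under this condition the two descriptions translate T T^* = T^* T into
  T^+ B = B T^+ and back.
*)

theory Submission
  imports Defs
begin

section \<open>Orthogonal projections and the Riesz representation\<close>

lemma closed_orthogonal_comp: "closed (W\<^sup>\<bottom>)"
  for W :: "'a::real_inner set"
proof -
  have "W\<^sup>\<bottom> = (\<Inter>y\<in>W. {x. inner y x = 0})"
    by (auto simp: orthogonal_comp_def orthogonal_def)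
  moreover have "closed {x. inner y x = 0}" for y :: 'a
    by (intro closed_Collect_eq continuous_intros)
  ultimately show ?thesis
    by auto
qed

lemma orthogonal_compI: "(\<And>s. s \<in> S \<Longrightarrow> inner s v = 0) \<Longrightarrow> v \<in> S\<^sup>\<bottom>"
  by (auto simp: orthogonal_comp_def orthogonal_def)

lemma orthogonal_compD: "v \<in> S\<^sup>\<bottom> \<Longrightarrow> s \<in> S \<Longrightarrow> inner s v = 0"
  by (auto simp: orthogonal_comp_def orthogonal_def)

lemma orthogonal_comp_self_eq_0: "v \<in> S \<Longrightarrow> v \<in> S\<^sup>\<bottom> \<Longrightarrow> v = 0"
  by (auto simp: orthogonal_comp_def orthogonal_def)

lemma orthogonal_to_dense_eq_0:
  fixes z :: "'a::real_inner"
  assumes "closure D = UNIV" and "\<And>x. x \<in> D \<Longrightarrow> inner x z = 0"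
  shows "z = 0"
proof -
  have "closed {x. inner x z = 0}"
    by (intro closed_Collect_eq continuous_intros)
  then have "closure D \<subseteq> {x. inner x z = 0}"
    using assms(2) by (intro closure_minimal) auto
  then have "inner z z = 0"
    using assms(1) by blast
  then show ?thesis
    by simp
qed

lemma parallelogram_law:
  fixes p q :: "'a::real_inner"
  shows "(norm (p - q))\<^sup>2 + (norm (p + q))\<^sup>2 = 2 * (norm p)\<^sup>2 + 2 * (norm q)\<^sup>2"
  by (simp add: power2_norm_eq_inner inner_diff_left inner_diff_right inner_add_left inner_add_right
      inner_commute algebra_simps)

lemma parallelogram_midpoint_bound:
  fixes x a b :: "'a::real_inner"
  assumes "0 \<le> d" and "d \<le> norm (x - (1/2) *\<^sub>R (a + b))"
  shows "(norm (a - b))\<^sup>2 \<le> 2 * (norm (x - a))\<^sup>2 + 2 * (norm (x - b))\<^sup>2 - 4 * d\<^sup>2"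
proof -
  define m where "m = x - (1/2) *\<^sub>R (a + b)"
  have "(x - a) - (x - b) = - (a - b)" and "(x - a) + (x - b) = 2 *\<^sub>R m"
    by (simp_all add: m_def algebra_simps flip: scaleR_2)
  then have "(norm (a - b))\<^sup>2 + (norm (2 *\<^sub>R m))\<^sup>2 = 2 * (norm (x - a))\<^sup>2 + 2 * (norm (x - b))\<^sup>2"
    using parallelogram_law[of "x - a" "x - b"] by (simp only: norm_minus_cancel)
  moreover have "(norm (2 *\<^sub>R m))\<^sup>2 = 4 * (norm m)\<^sup>2"
    by (simp add: power_mult_distrib)
  moreover have "d\<^sup>2 \<le> (norm m)\<^sup>2"
    using assms by (simp add: m_def power_mono)
  ultimately show ?thesis
    by linarith
qed

lemma minimizing_sequence_Cauchy:
  fixes S :: "'a::real_inner set"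
  assumes "subspace S" and "\<And>n. s n \<in> S"
    and "0 \<le> d" and d_le: "\<And>y. y \<in> S \<Longrightarrow> d \<le> norm (x - y)"
    and lim: "(\<lambda>n. norm (x - s n)) \<longlonglongrightarrow> d"
  shows "Cauchy s"
proof (rule metric_CauchyI)
  fix e :: real
  assume "e > 0"
  define b where "b n = 2 * (norm (x - s n))\<^sup>2 - 2 * d\<^sup>2" for n
  have "b \<longlonglongrightarrow> 2 * d\<^sup>2 - 2 * d\<^sup>2"
    unfolding b_def by (intro tendsto_diff tendsto_mult tendsto_const tendsto_power lim)
  then obtain n0 where n0: "\<And>n. n \<ge> n0 \<Longrightarrow> b n < e\<^sup>2 / 2"
    using order_tendstoD(2)[of b 0 sequentially "e\<^sup>2 / 2"] \<open>e > 0\<close>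
    by (auto simp: eventually_sequentially)
  have "dist (s m) (s n) < e" if "m \<ge> n0" "n \<ge> n0" for m n
  proof -
    have "(1/2) *\<^sub>R (s m + s n) \<in> S"
      using assms(1,2) by (simp add: subspace_add subspace_scale)
    then have "(norm (s m - s n))\<^sup>2 \<le> b m + b n"
      using parallelogram_midpoint_bound[OF \<open>0 \<le> d\<close> d_le] by (simp add: b_def)
    also have "\<dots> < e\<^sup>2"
      using n0[OF that(1)] n0[OF that(2)] by simp
    finally show ?thesis
      using \<open>e > 0\<close> by (simp add: dist_norm power_less_imp_less_base)
  qed
  then show "\<exists>n0. \<forall>m\<ge>n0. \<forall>n\<ge>n0. dist (s m) (s n) < e"
    by blast
qed

lemma closed_subspace_nearest_point_exists:
  fixes S :: "'a::{real_inner,complete_space} set"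
  assumes "subspace S" and "closed S"
  obtains s where "s \<in> S" and "\<And>y. y \<in> S \<Longrightarrow> norm (x - s) \<le> norm (x - y)"
proof -
  define d where "d = infdist x S"
  have d_le: "d \<le> norm (x - y)" if "y \<in> S" for y
    using infdist_le[OF that, of x] by (simp add: d_def dist_norm)
  have "bdd_below (dist x ` S)" and "S \<noteq> {}"
    using assms(1) subspace_0 by (auto intro: bdd_belowI[of _ 0])
  then have "\<exists>y\<in>S. norm (x - y) < d + 1 / Suc n" for n
    using cINF_less_iff[of S "dist x" "d + 1 / Suc n"] by (simp add: d_def infdist_notempty dist_norm)
  then obtain s where s: "\<And>n. s n \<in> S" and s_close: "\<And>n. norm (x - s n) < d + 1 / Suc n"
    by metis
  have lim: "(\<lambda>n. norm (x - s n)) \<longlonglongrightarrow> d"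
  proof (rule real_tendsto_sandwich)
    show "\<forall>\<^sub>F n in sequentially. d \<le> norm (x - s n)"
      using d_le s by simp
    show "\<forall>\<^sub>F n in sequentially. norm (x - s n) \<le> d + 1 / Suc n"
      using s_close by (simp add: less_imp_le)
    show "(\<lambda>n. d + 1 / Suc n) \<longlonglongrightarrow> d"
      using tendsto_add[OF tendsto_const LIMSEQ_Suc[OF lim_const_over_n[of 1]]] by simp
  qed simp
  have "0 \<le> d"
    by (simp add: d_def infdist_nonneg)
  then have "Cauchy s"
    using minimizing_sequence_Cauchy[OF assms(1) s _ d_le lim] by blast
  then obtain s0 where "s \<longlonglongrightarrow> s0"
    using Cauchy_convergent_iff convergent_def by blast
  then have "s0 \<in> S"
    using closed_sequentially[OF assms(2)] s by blast
  moreover have "(\<lambda>n. norm (x - s n)) \<longlonglongrightarrow> norm (x - s0)"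
    by (intro tendsto_intros \<open>s \<longlonglongrightarrow> s0\<close>)
  then have "norm (x - s0) = d"
    using lim LIMSEQ_unique by blast
  ultimately show ?thesis
    using that d_le by blast
qed

lemma nearest_point_orthogonal:
  assumes "subspace S" and "s \<in> S" and nearest: "\<And>y. y \<in> S \<Longrightarrow> norm (x - s) \<le> norm (x - y)"
  shows "x - s \<in> S\<^sup>\<bottom>"
proof (rule orthogonal_compI)
  fix y
  assume "y \<in> S"
  show "inner y (x - s) = 0"
  proof (cases "y = 0")
    case False
    define w where "w = x - s"
    define c where "c = inner y w"
    define k where "k = inner y y"
    have "k > 0"
      using False by (simp add: k_def)
    have "s + (c / k) *\<^sub>R y \<in> S"
      using assms(1,2) \<open>y \<in> S\<close> by (simp add: subspace_add subspace_scale)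
    then have "norm w \<le> norm (w - (c / k) *\<^sub>R y)"
      using nearest by (simp add: w_def algebra_simps)
    then have "(norm w)\<^sup>2 \<le> (norm (w - (c / k) *\<^sub>R y))\<^sup>2"
      by (simp add: power_mono)
    also have "\<dots> = (norm w)\<^sup>2 - c\<^sup>2 / k"
      using \<open>k > 0\<close>
      unfolding power2_norm_eq_inner
      by (simp add: inner_diff_left inner_diff_right c_def k_def inner_commute
          power2_eq_square field_simps)
    finally have "c\<^sup>2 / k \<le> 0"
      by simp
    then show ?thesis
      using \<open>k > 0\<close> by (simp add: c_def w_def divide_le_0_iff)
  qed simp
qed

definition orth_proj :: "'a::real_inner set \<Rightarrow> 'a \<Rightarrow> 'a" where
  "orth_proj S x = (SOME s. s \<in> S \<and> x - s \<in> S\<^sup>\<bottom>)"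

locale closed_subspace =
  fixes S :: "'a::{real_inner,complete_space} set"
  assumes subspace: "subspace S" and closed: "closed S"
begin

lemma orth_proj_in: "orth_proj S x \<in> S"
  and orth_proj_orthogonal: "x - orth_proj S x \<in> S\<^sup>\<bottom>"
proof -
  obtain s where "s \<in> S" "\<And>y. y \<in> S \<Longrightarrow> norm (x - s) \<le> norm (x - y)"
    using closed_subspace_nearest_point_exists[OF subspace closed] by blast
  then have "\<exists>s. s \<in> S \<and> x - s \<in> S\<^sup>\<bottom>"
    using nearest_point_orthogonal[OF subspace] by blast
  then have "orth_proj S x \<in> S \<and> x - orth_proj S x \<in> S\<^sup>\<bottom>"
    unfolding orth_proj_def by (rule someI_ex)
  then show "orth_proj S x \<in> S" "x - orth_proj S x \<in> S\<^sup>\<bottom>"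
    by auto
qed

lemma orth_proj_unique:
  assumes "s \<in> S" and "x - s \<in> S\<^sup>\<bottom>"
  shows "orth_proj S x = s"
proof -
  have "s - orth_proj S x \<in> S"
    using assms(1) orth_proj_in subspace by (simp add: subspace_diff)
  moreover have "s - orth_proj S x = (x - orth_proj S x) - (x - s)"
    by simp
  then have "s - orth_proj S x \<in> S\<^sup>\<bottom>"
    using orth_proj_orthogonal assms(2) subspace_orthogonal_comp by (metis subspace_diff)
  ultimately show ?thesis
    using orthogonal_comp_self_eq_0 by fastforce
qed

lemma orth_proj_id: "x \<in> S \<Longrightarrow> orth_proj S x = x"
  by (rule orth_proj_unique) (auto simp: subspace_orthogonal_comp subspace_0)

lemma orth_proj_eq_0: "x \<in> S\<^sup>\<bottom> \<Longrightarrow> orth_proj S x = 0"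
  by (rule orth_proj_unique) (auto simp: subspace subspace_0)

lemma norm_orth_proj_le: "norm (orth_proj S x) \<le> norm x"
proof -
  have "inner (orth_proj S x) (x - orth_proj S x) = 0"
    using orth_proj_in orth_proj_orthogonal orthogonal_compD by blast
  then have "(norm x)\<^sup>2 = (norm (orth_proj S x))\<^sup>2 + (norm (x - orth_proj S x))\<^sup>2"
    by (simp add: power2_norm_eq_inner inner_diff_left inner_diff_right inner_commute)
  then show ?thesis
    by (simp add: power2_le_imp_le)
qed

lemma bounded_linear_orth_proj: "bounded_linear (orth_proj S)"
proof (rule bounded_linear_intro[where K = 1])
  show "orth_proj S (x + y) = orth_proj S x + orth_proj S y" for x y
  proof (rule orth_proj_unique)
    show "orth_proj S x + orth_proj S y \<in> S"
      using orth_proj_in subspace by (simp add: subspace_add)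
    have "x + y - (orth_proj S x + orth_proj S y) = (x - orth_proj S x) + (y - orth_proj S y)"
      by simp
    then show "x + y - (orth_proj S x + orth_proj S y) \<in> S\<^sup>\<bottom>"
      using orth_proj_orthogonal subspace_orthogonal_comp by (metis subspace_add)
  qed
  show "orth_proj S (c *\<^sub>R x) = c *\<^sub>R orth_proj S x" for c x
  proof (rule orth_proj_unique)
    show "c *\<^sub>R orth_proj S x \<in> S"
      using orth_proj_in subspace by (simp add: subspace_scale)
    have "c *\<^sub>R x - c *\<^sub>R orth_proj S x = c *\<^sub>R (x - orth_proj S x)"
      by (simp add: algebra_simps)
    then show "c *\<^sub>R x - c *\<^sub>R orth_proj S x \<in> S\<^sup>\<bottom>"
      using orth_proj_orthogonal subspace_orthogonal_comp by (metis subspace_scale)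
  qed
qed (simp add: norm_orth_proj_le)

lemma inner_diff_orth_proj: "inner (x - orth_proj S x) y = inner x (y - orth_proj S y)"
proof -
  have "inner (orth_proj S y) (x - orth_proj S x) = 0"
    and "inner (orth_proj S x) (y - orth_proj S y) = 0"
    using orthogonal_compD[OF orth_proj_orthogonal orth_proj_in] by blast+
  then show ?thesis
    by (simp add: inner_diff_left inner_diff_right inner_commute)
qed

lemma orthogonal_comp_orthogonal_comp: "S\<^sup>\<bottom>\<^sup>\<bottom> = S"
proof
  show "S\<^sup>\<bottom>\<^sup>\<bottom> \<subseteq> S"
  proof
    fix x
    assume x: "x \<in> S\<^sup>\<bottom>\<^sup>\<bottom>"
    have "orth_proj S x \<in> S\<^sup>\<bottom>\<^sup>\<bottom>"
      using orth_proj_in orthogonal_comp_subset by blast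
    then have "x - orth_proj S x \<in> S\<^sup>\<bottom>\<^sup>\<bottom>"
      using x subspace_orthogonal_comp by (metis subspace_diff)
    then have "x = orth_proj S x"
      using orth_proj_orthogonal orthogonal_comp_self_eq_0 by fastforce
    then show "x \<in> S"
      using orth_proj_in by metis
  qed
qed (rule orthogonal_comp_subset)

end

lemma riesz_representation:
  fixes f :: "'a::{real_inner,complete_space} \<Rightarrow> real"
  assumes "bounded_linear f"
  obtains z where "\<And>x. f x = inner x z"
proof (cases "\<forall>x. f x = 0")
  case True
  then show ?thesis
    using that[of 0] by simp
next
  case False
  then obtain x0 where "f x0 \<noteq> 0"
    by blast
  interpret f: bounded_linear f
    by fact
  interpret ker: closed_subspace "{x. f x = 0}"
  proof
    show "subspace {x. f x = 0}"
      by (simp add: subspace_def f.add f.scale)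
    show "closed {x. f x = 0}"
      by (intro closed_Collect_eq f.continuous_on continuous_on_id continuous_on_const)
  qed
  define w where "w = x0 - orth_proj {x. f x = 0} x0"
  have w_perp: "w \<in> {x. f x = 0}\<^sup>\<bottom>"
    unfolding w_def by (rule ker.orth_proj_orthogonal)
  have "f w = f x0"
    using ker.orth_proj_in[of x0] by (simp add: w_def f.diff)
  with \<open>f x0 \<noteq> 0\<close> have "f w \<noteq> 0" "inner w w \<noteq> 0"
    by auto
  have "f x = inner x ((f w / inner w w) *\<^sub>R w)" for x
  proof -
    have "f (x - (f x / f w) *\<^sub>R w) = 0"
      using \<open>f w \<noteq> 0\<close> by (simp add: f.diff f.scale)
    then have "inner (x - (f x / f w) *\<^sub>R w) w = 0"
      using w_perp orthogonal_compD by blast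
    then show ?thesis
      using \<open>f w \<noteq> 0\<close> \<open>inner w w \<noteq> 0\<close> by (simp add: inner_diff_left field_simps)
  qed
  then show ?thesis
    using that by blast
qed

section \<open>The closed graph theorem\<close>

lemma Baire_closed_cover_has_interior:
  fixes A :: "nat \<Rightarrow> 'a::{metric_space,complete_space} set"
  assumes "\<And>n. closed (A n)" and "(\<Union>n. A n) = UNIV"
  obtains n where "interior (A n) \<noteq> {}"
proof (rule ccontr)
  assume "\<not> thesis"
  then have "\<And>n. interior (A n) = {}"
    using that by blast
  then have "euclidean interior_of \<Union>(range A) = {}"
    using assms(1) completely_metrizable_space_euclidean
    by (intro Baire_category_alt) auto
  with assms(2) show False
    by simp
qed

lemma closure_sublevel_recentre:
  fixes G :: "'a::real_normed_vector \<Rightarrow> 'b::real_normed_vector"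
  assumes "linear G" and ball: "ball y0 r \<subseteq> closure {z. norm (G z) \<le> K}" and "norm y < r"
  shows "y \<in> closure {z. norm (G z) \<le> 2 * K}"
  unfolding closure_approachable
proof (intro allI impI)
  fix e :: real
  assume "e > 0"
  have "0 < r"
    using \<open>norm y < r\<close> norm_ge_zero[of y] by linarith
  then have "y0 + y \<in> closure {z. norm (G z) \<le> K}" and "y0 \<in> closure {z. norm (G z) \<le> K}"
    using ball \<open>norm y < r\<close> by (auto simp: dist_norm)
  then obtain a b where a: "norm (G a) \<le> K" "dist a (y0 + y) < e / 2"
    and b: "norm (G b) \<le> K" "dist b y0 < e / 2"
    unfolding closure_approachable using half_gt_zero[OF \<open>e > 0\<close>] by blast
  have "norm (G (a - b)) \<le> 2 * K"
    using a(1) b(1) norm_triangle_ineq4[of "G a" "G b"] by (simp add: linear_diff[OF assms(1)])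
  moreover have "a - b - y = (a - (y0 + y)) - (b - y0)"
    by (simp add: algebra_simps)
  then have "norm (a - b - y) \<le> norm (a - (y0 + y)) + norm (b - y0)"
    by (metis norm_triangle_ineq4)
  then have "dist (a - b) y < e"
    using a(2) b(2) by (simp add: dist_norm)
  ultimately show "\<exists>z\<in>{z. norm (G z) \<le> 2 * K}. dist z y < e"
    by blast
qed

lemma sublevel_closure_contains_ball:
  fixes G :: "'a::{real_normed_vector,complete_space} \<Rightarrow> 'b::real_normed_vector"
  assumes "linear G"
  obtains K r where "0 \<le> K" and "0 < r" and "\<And>y. norm y < r \<Longrightarrow> y \<in> closure {z. norm (G z) \<le> K}"
proof -
  define A where "A n = closure {y. norm (G y) \<le> real n}" for n
  have "y \<in> A (nat \<lceil>norm (G y)\<rceil>)" for y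
    unfolding A_def by (rule closure_subset[THEN subsetD]) (simp add: real_nat_ceiling_ge)
  then have "(\<Union>n. A n) = UNIV"
    by blast
  moreover have "closed (A n)" for n
    by (simp add: A_def)
  ultimately obtain n where "interior (A n) \<noteq> {}"
    using Baire_closed_cover_has_interior by blast
  then obtain y0 where "y0 \<in> interior (A n)"
    by blast
  then obtain r where "0 < r" and "ball y0 r \<subseteq> A n"
    using open_contains_ball interior_subset by (metis open_interior subset_trans)
  then show ?thesis
    using that[of "2 * real n" r] closure_sublevel_recentre[OF assms] by (simp add: A_def)
qed

lemma linear_approximate_preimage:
  fixes G :: "'a::{real_normed_vector,complete_space} \<Rightarrow> 'b::real_normed_vector"
  assumes "linear G"
  obtains C where "0 \<le> C" and "\<And>y. \<exists>z. norm (y - z) \<le> norm y / 2 \<and> norm (G z) \<le> C * norm y"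
proof -
  obtain K r where "0 \<le> K" "0 < r" and ball: "\<And>y. norm y < r \<Longrightarrow> y \<in> closure {z. norm (G z) \<le> K}"
    using sublevel_closure_contains_ball[OF assms] by blast
  have "\<exists>z. norm (y - z) \<le> norm y / 2 \<and> norm (G z) \<le> (2 * K / r) * norm y" for y
  proof (cases "y = 0")
    case True
    then show ?thesis
      by (intro exI[of _ 0]) (simp add: linear_0[OF assms])
  next
    case False
    define t where "t = r / (2 * norm y)"
    have "t > 0"
      using \<open>0 < r\<close> False by (simp add: t_def)
    have "norm (t *\<^sub>R y) < r"
      using \<open>0 < r\<close> False by (simp add: t_def)
    then have "t *\<^sub>R y \<in> closure {z. norm (G z) \<le> K}"
      by (rule ball)
    moreover have "r / 4 > 0"
      using \<open>0 < r\<close> by simp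
    ultimately obtain s where s: "norm (G s) \<le> K" "dist s (t *\<^sub>R y) < r / 4"
      unfolding closure_approachable by blast
    have "y - s /\<^sub>R t = - ((s - t *\<^sub>R y) /\<^sub>R t)"
      using \<open>t > 0\<close> by (simp add: scaleR_diff_right)
    then have "norm (y - s /\<^sub>R t) = dist s (t *\<^sub>R y) / t"
      using \<open>t > 0\<close> by (simp add: dist_norm divide_inverse_commute)
    also have "\<dots> \<le> norm y / 2"
      using s(2) \<open>t > 0\<close> \<open>0 < r\<close> False by (simp add: t_def field_simps)
    finally have "norm (y - s /\<^sub>R t) \<le> norm y / 2" .
    moreover have "norm (G (s /\<^sub>R t)) \<le> (2 * K / r) * norm y"
      using s(1) \<open>t > 0\<close> \<open>0 < r\<close> False
      by (simp add: linear_scale[OF assms] t_def field_simps)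
    ultimately show ?thesis
      by blast
  qed
  then show ?thesis
    using that[of "2 * K / r"] \<open>0 \<le> K\<close> \<open>0 < r\<close> by simp
qed

lemma geometric_half_tail_le: "(\<Sum>k\<in>{a<..b}. (1/2::real) ^ k) \<le> (1/2) ^ a"
proof -
  have "(\<Sum>k\<in>{a<..b}. (1/2::real) ^ k) = (if b < Suc a then 0 else (1/2) ^ a - (1/2) ^ b)"
    unfolding atLeastSucAtMost_greaterThanAtMost[symmetric] sum_gp by (simp add: field_simps)
  then show ?thesis
    by simp
qed

lemma geometric_half_dominated:
  fixes g :: "nat \<Rightarrow> 'b::{real_normed_vector,complete_space}"
  assumes g_le: "\<And>k. norm (g k) \<le> c * (1/2) ^ k"
  shows "summable g" and "norm (\<Sum>k. g k) \<le> 2 * c"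
proof -
  have "0 \<le> c"
    using order_trans[OF norm_ge_zero g_le[of 0]] by simp
  have sum_le: "norm (\<Sum>k\<in>I. g k) \<le> c * (\<Sum>k\<in>I. (1/2) ^ k)" for I
    using sum_norm_le[of I g "\<lambda>k. c * (1/2) ^ k"] g_le by (simp add: sum_distrib_left)
  show "summable g"
  proof (rule summable_bounded_partials)
    have "norm (\<Sum>k\<in>{a<..b}. g k) \<le> c * (1/2) ^ a" for a b
      using order_trans[OF sum_le mult_left_mono[OF geometric_half_tail_le \<open>0 \<le> c\<close>]] .
    then show "\<forall>\<^sub>F a0 in sequentially. \<forall>a\<ge>a0. \<forall>b>a. norm (\<Sum>k\<in>{a<..b}. g k) \<le> c * (1/2) ^ a"
      by simp
    show "(\<lambda>a. c * (1/2::real) ^ a) \<longlonglongrightarrow> 0"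
      by (intro tendsto_mult_right_zero LIMSEQ_power_zero) simp
  qed
  show "norm (\<Sum>k. g k) \<le> 2 * c"
  proof (rule LIMSEQ_le_const2[OF tendsto_norm[OF summable_LIMSEQ[OF \<open>summable g\<close>]]], intro exI allI impI)
    fix m
    have "(\<Sum>k<m. (1/2::real) ^ k) \<le> 2"
      by (simp add: sum_gp_strict)
    then show "norm (\<Sum>k<m. g k) \<le> 2 * c"
      using order_trans[OF sum_le mult_left_mono[of _ 2 c]] \<open>0 \<le> c\<close> by (simp add: mult.commute)
  qed
qed

lemma successive_approximation:
  fixes G :: "'a::real_normed_vector \<Rightarrow> 'b::real_normed_vector"
  assumes "0 \<le> C" and approx: "\<And>y. \<exists>z. norm (y - z) \<le> norm y / 2 \<and> norm (G z) \<le> C * norm y"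
  obtains z where "(\<lambda>m. \<Sum>k<m. z k) \<longlonglongrightarrow> y" and "\<And>k. norm (G (z k)) \<le> C * norm y * (1/2) ^ k"
proof -
  have "\<forall>v. \<exists>z. norm (v - z) \<le> norm v / 2 \<and> norm (G z) \<le> C * norm v"
    using approx by blast
  then obtain f where f: "\<And>v. norm (v - f v) \<le> norm v / 2" "\<And>v. norm (G (f v)) \<le> C * norm v"
    unfolding choice_iff by blast
  define r where "r k = ((\<lambda>v. v - f v) ^^ k) y" for k
  have r_Suc: "r (Suc k) = r k - f (r k)" for k
    by (simp add: r_def)
  have r_le: "norm (r k) \<le> norm y * (1/2) ^ k" for k
  proof (induction k)
    case (Suc k)
    have "norm (r (Suc k)) \<le> norm (r k) / 2"
      using f(1) by (simp add: r_Suc)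
    also have "\<dots> \<le> norm y * (1/2) ^ Suc k"
      using Suc by simp
    finally show ?case .
  qed (simp add: r_def)
  have "(\<lambda>k. norm y * (1/2::real) ^ k) \<longlonglongrightarrow> 0"
    by (intro tendsto_mult_right_zero LIMSEQ_power_zero) simp
  moreover have "\<forall>\<^sub>F k in sequentially. norm (r k) \<le> norm (norm y * (1/2::real) ^ k)"
    using r_le by simp
  ultimately have "r \<longlonglongrightarrow> 0"
    by (rule Lim_transform_bound[rotated])
  moreover have "(\<Sum>k<m. f (r k)) = y - r m" for m
    by (induction m) (simp_all add: r_def[of 0] r_Suc)
  ultimately have "(\<lambda>m. \<Sum>k<m. f (r k)) \<longlonglongrightarrow> y"
    using tendsto_diff[OF tendsto_const, of r 0 sequentially y] by simp
  moreover have "norm (G (f (r k))) \<le> C * norm y * (1/2) ^ k" for k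
    using order_trans[OF f(2) mult_left_mono[OF r_le \<open>0 \<le> C\<close>]] by (simp add: mult.assoc)
  ultimately show ?thesis
    using that by blast
qed

lemma closed_graph_norm_bound:
  fixes G :: "'a::{real_normed_vector,complete_space} \<Rightarrow> 'b::{real_normed_vector,complete_space}"
  assumes "linear G" and "0 \<le> C"
    and approx: "\<And>y. \<exists>z. norm (y - z) \<le> norm y / 2 \<and> norm (G z) \<le> C * norm y"
    and closed_graph: "\<And>x y xs. xs \<longlonglongrightarrow> x \<Longrightarrow> (\<lambda>k. G (xs k)) \<longlonglongrightarrow> y \<Longrightarrow> G x = y"
  shows "norm (G y) \<le> 2 * C * norm y"
proof -
  obtain z where z_lim: "(\<lambda>m. \<Sum>k<m. z k) \<longlonglongrightarrow> y"
    and Gz_le: "\<And>k. norm (G (z k)) \<le> C * norm y * (1/2) ^ k"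
    using successive_approximation[OF \<open>0 \<le> C\<close> approx] by blast
  have "(\<lambda>m. \<Sum>k<m. G (z k)) \<longlonglongrightarrow> (\<Sum>k. G (z k))"
    using summable_LIMSEQ[OF geometric_half_dominated(1)[OF Gz_le]] .
  then have "(\<lambda>m. G (\<Sum>k<m. z k)) \<longlonglongrightarrow> (\<Sum>k. G (z k))"
    by (simp add: linear_sum[OF \<open>linear G\<close>])
  with z_lim have "G y = (\<Sum>k. G (z k))"
    by (rule closed_graph)
  then show ?thesis
    using geometric_half_dominated(2)[OF Gz_le] by (simp add: mult.assoc)
qed

theorem closed_graph_imp_bounded_linear:
  fixes G :: "'a::{real_normed_vector,complete_space} \<Rightarrow> 'b::{real_normed_vector,complete_space}"
  assumes "linear G"
    and closed_graph: "\<And>x y xs. xs \<longlonglongrightarrow> x \<Longrightarrow> (\<lambda>k. G (xs k)) \<longlonglongrightarrow> y \<Longrightarrow> G x = y"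
  shows "bounded_linear G"
proof -
  obtain C where "0 \<le> C" "\<And>y. \<exists>z. norm (y - z) \<le> norm y / 2 \<and> norm (G z) \<le> C * norm y"
    using linear_approximate_preimage[OF assms(1)] by blast
  then have "norm (G y) \<le> norm y * (2 * C)" for y
    using closed_graph_norm_bound[OF assms(1)] closed_graph by (simp add: mult.commute)
  then show ?thesis
    by (intro bounded_linear_intro[where K = "2 * C"])
      (simp_all add: linear_add[OF assms(1)] linear_scale[OF assms(1)])
qed

section \<open>Closed densely defined operators with closed range\<close>

locale closed_range_operator =
  fixes D :: "'a::{real_inner,complete_space} set" and T :: "'a \<Rightarrow> 'a"
  assumes subspace_dom: "subspace D"
    and add: "\<And>x y. x \<in> D \<Longrightarrow> y \<in> D \<Longrightarrow> T (x + y) = T x + T y"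
    and scale: "\<And>c x. x \<in> D \<Longrightarrow> T (c *\<^sub>R x) = c *\<^sub>R T x"
    and dense_dom: "closure D = UNIV"
    and closed_graph: "closed {(x, T x) | x. x \<in> D}"
    and closed_range: "closed (T ` D)"
begin

definition N :: "'a set" where "N = {x \<in> D. T x = 0}"
definition R :: "'a set" where "R = T ` D"

lemma zero_in_dom: "0 \<in> D"
  using subspace_dom subspace_0 by blast

lemma T_0: "T 0 = 0"
  using scale[OF zero_in_dom, of 0] by simp

lemma add_in_dom: "x \<in> D \<Longrightarrow> y \<in> D \<Longrightarrow> x + y \<in> D"
  using subspace_dom subspace_add by blast

lemma scale_in_dom: "x \<in> D \<Longrightarrow> c *\<^sub>R x \<in> D"
  using subspace_dom subspace_scale by blast

lemma diff_in_dom: "x \<in> D \<Longrightarrow> y \<in> D \<Longrightarrow> x - y \<in> D"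
  using subspace_dom subspace_diff by blast

lemma T_diff:
  assumes "x \<in> D" and "y \<in> D"
  shows "T (x - y) = T x - T y"
proof -
  have "T (x - y) + T y = T x"
    using add[OF diff_in_dom[OF assms] assms(2)] by simp
  then show ?thesis
    by (simp add: eq_diff_eq)
qed

lemma closed_graphD:
  assumes "\<And>k. xs k \<in> D" and "xs \<longlonglongrightarrow> x" and "(\<lambda>k. T (xs k)) \<longlonglongrightarrow> y"
  shows "x \<in> D" and "T x = y"
proof -
  have "(xs k, T (xs k)) \<in> {(x, T x) | x. x \<in> D}" for k
    using assms(1) by blast
  moreover have "(\<lambda>k. (xs k, T (xs k))) \<longlonglongrightarrow> (x, y)"
    using assms(2,3) by (rule tendsto_Pair)
  ultimately have "(x, y) \<in> {(x, T x) | x. x \<in> D}"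
    by (rule closed_sequentially[OF closed_graph])
  then show "x \<in> D" "T x = y"
    by auto
qed

sublocale ker: closed_subspace N
proof
  show "subspace N"
    unfolding subspace_def N_def
    using zero_in_dom T_0 add scale add_in_dom scale_in_dom by simp
  show "closed N"
  proof (rule closed_sequential_limits[THEN iffD2], intro allI impI)
    fix xs x
    assume "(\<forall>k. xs k \<in> N) \<and> xs \<longlonglongrightarrow> x"
    then show "x \<in> N"
      using closed_graphD[of xs x 0] by (simp add: N_def)
  qed
qed

sublocale ran: closed_subspace R
proof
  show "subspace R"
    unfolding subspace_def R_def
  proof (intro conjI ballI allI)
    show "0 \<in> T ` D"
      using zero_in_dom T_0 by force
    show "u + v \<in> T ` D" if u: "u \<in> T ` D" and v: "v \<in> T ` D" for u v
    proof -
      obtain a b where "a \<in> D" "b \<in> D" "u = T a" "v = T b"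
        using u v by blast
      then have "u + v = T (a + b)" and "a + b \<in> D"
        by (simp_all add: add add_in_dom)
      then show ?thesis
        by blast
    qed
    show "c *\<^sub>R u \<in> T ` D" if u: "u \<in> T ` D" for c u
    proof -
      obtain a where "a \<in> D" "u = T a"
        using u by blast
      then have "c *\<^sub>R u = T (c *\<^sub>R a)" and "c *\<^sub>R a \<in> D"
        by (simp_all add: scale scale_in_dom)
      then show ?thesis
        by blast
    qed
  qed
  show "closed R"
    using closed_range by (simp add: R_def)
qed

lemma T_in_range: "x \<in> D \<Longrightarrow> T x \<in> R"
  by (simp add: R_def)

lemma ker_subset_dom: "N \<subseteq> D"
  by (auto simp: N_def)

lemma T_diff_orth_proj_ker:
  assumes "x \<in> D"
  shows "x - orth_proj N x \<in> D" and "T (x - orth_proj N x) = T x"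
  using assms ker.orth_proj_in[of x] ker_subset_dom diff_in_dom T_diff by (auto simp: N_def)

lemma inj_on_orthogonal_ker:
  assumes "x \<in> D" "x \<in> N\<^sup>\<bottom>" "x' \<in> D" "x' \<in> N\<^sup>\<bottom>" and "T x = T x'"
  shows "x = x'"
proof -
  have "x - x' \<in> N"
    using assms diff_in_dom T_diff by (simp add: N_def)
  moreover have "x - x' \<in> N\<^sup>\<bottom>"
    using assms(2,4) subspace_orthogonal_comp subspace_diff by blast
  ultimately show ?thesis
    using orthogonal_comp_self_eq_0 by fastforce
qed

text \<open>The Moore-Penrose inverse \<open>T\<^sup>+\<close>, defined on the whole space since \<open>R\<close> is closed.\<close>

definition pinv :: "'a \<Rightarrow> 'a" where
  "pinv y = (SOME x. x \<in> D \<and> x \<in> N\<^sup>\<bottom> \<and> T x = orth_proj R y)"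

lemma pinv_in_dom: "pinv y \<in> D"
  and pinv_orthogonal_ker: "pinv y \<in> N\<^sup>\<bottom>"
  and T_pinv: "T (pinv y) = orth_proj R y"
proof -
  obtain x where "x \<in> D" "T x = orth_proj R y"
    using ran.orth_proj_in[of y] by (auto simp: R_def)
  then have "\<exists>x. x \<in> D \<and> x \<in> N\<^sup>\<bottom> \<and> T x = orth_proj R y"
    using T_diff_orth_proj_ker ker.orth_proj_orthogonal by metis
  then have "pinv y \<in> D \<and> pinv y \<in> N\<^sup>\<bottom> \<and> T (pinv y) = orth_proj R y"
    unfolding pinv_def by (rule someI_ex)
  then show "pinv y \<in> D" "pinv y \<in> N\<^sup>\<bottom>" "T (pinv y) = orth_proj R y"
    by auto
qed

lemma pinv_unique: "x \<in> D \<Longrightarrow> x \<in> N\<^sup>\<bottom> \<Longrightarrow> T x = orth_proj R y \<Longrightarrow> pinv y = x"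
  using inj_on_orthogonal_ker pinv_in_dom pinv_orthogonal_ker T_pinv by metis

lemma linear_pinv: "linear pinv"
proof
  show "pinv (a + b) = pinv a + pinv b" for a b
  proof (rule pinv_unique)
    show "pinv a + pinv b \<in> D"
      using pinv_in_dom add_in_dom by blast
    show "pinv a + pinv b \<in> N\<^sup>\<bottom>"
      using pinv_orthogonal_ker subspace_orthogonal_comp subspace_add by blast
    show "T (pinv a + pinv b) = orth_proj R (a + b)"
      using pinv_in_dom add T_pinv linear_add[OF bounded_linear.linear[OF ran.bounded_linear_orth_proj]]
      by simp
  qed
  show "pinv (c *\<^sub>R a) = c *\<^sub>R pinv a" for c a
  proof (rule pinv_unique)
    show "c *\<^sub>R pinv a \<in> D"
      using pinv_in_dom scale_in_dom by blast
    show "c *\<^sub>R pinv a \<in> N\<^sup>\<bottom>"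
      using pinv_orthogonal_ker subspace_orthogonal_comp subspace_scale by blast
    show "T (c *\<^sub>R pinv a) = orth_proj R (c *\<^sub>R a)"
      using pinv_in_dom scale T_pinv linear_scale[OF bounded_linear.linear[OF ran.bounded_linear_orth_proj]]
      by simp
  qed
qed

lemma pinv_T: "x \<in> D \<Longrightarrow> pinv (T x) = x - orth_proj N x"
  using T_diff_orth_proj_ker ker.orth_proj_orthogonal ran.orth_proj_id T_in_range
  by (intro pinv_unique) auto

lemma pinv_orth_proj_range: "pinv (orth_proj R y) = pinv y"
  using pinv_in_dom pinv_orthogonal_ker T_pinv ran.orth_proj_id[OF ran.orth_proj_in]
  by (intro pinv_unique) simp_all

lemma pinv_eq_0_iff: "pinv y = 0 \<longleftrightarrow> y \<in> R\<^sup>\<bottom>"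
proof
  assume "pinv y = 0"
  then have "orth_proj R y = 0"
    using T_pinv[of y] T_0 by simp
  then show "y \<in> R\<^sup>\<bottom>"
    using ran.orth_proj_orthogonal[of y] by simp
next
  assume "y \<in> R\<^sup>\<bottom>"
  then show "pinv y = 0"
    using zero_in_dom subspace_orthogonal_comp subspace_0 T_0 ran.orth_proj_eq_0
    by (intro pinv_unique) auto
qed

lemma bounded_linear_pinv: "bounded_linear pinv"
proof (rule closed_graph_imp_bounded_linear[OF linear_pinv])
  fix y x ys
  assume "ys \<longlonglongrightarrow> y" and lim: "(\<lambda>k. pinv (ys k)) \<longlonglongrightarrow> x"
  then have "(\<lambda>k. T (pinv (ys k))) \<longlonglongrightarrow> orth_proj R y"
    using bounded_linear.tendsto[OF ran.bounded_linear_orth_proj] by (simp add: T_pinv)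
  then have "x \<in> D" and "T x = orth_proj R y"
    using closed_graphD[OF pinv_in_dom lim] by auto
  moreover have "x \<in> N\<^sup>\<bottom>"
    by (rule closed_sequentially[OF closed_orthogonal_comp _ lim]) (simp add: pinv_orthogonal_ker)
  ultimately show "pinv y = x"
    by (simp add: pinv_unique)
qed

text \<open>The adjoint of \<open>T\<^sup>+\<close>; by \<open>cauchy_dual_eq\<close> it is the generalized Cauchy dual \<open>w(T)\<close>.\<close>

definition cdual :: "'a \<Rightarrow> 'a" where
  "cdual v = (SOME z. \<forall>u. inner (pinv u) v = inner u z)"

lemma inner_pinv_cdual: "inner (pinv u) v = inner u (cdual v)"
proof -
  obtain z where "\<And>u. inner (pinv u) v = inner u z"
    using riesz_representation[OF bounded_linear_compose[OF bounded_linear_inner_left bounded_linear_pinv]]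
    by blast
  then have "\<exists>z. \<forall>u. inner (pinv u) v = inner u z"
    by blast
  then have "\<forall>u. inner (pinv u) v = inner u (cdual v)"
    unfolding cdual_def by (rule someI_ex)
  then show ?thesis
    by blast
qed

lemma linear_cdual: "linear cdual"
proof
  show "cdual (a + b) = cdual a + cdual b" for a b
    by (rule vector_eq_ldot[THEN iffD1]) (simp add: inner_add_right flip: inner_pinv_cdual)
  show "cdual (c *\<^sub>R a) = c *\<^sub>R cdual a" for c a
    by (rule vector_eq_ldot[THEN iffD1]) (simp flip: inner_pinv_cdual)
qed

lemma cdual_ker: "n \<in> N \<Longrightarrow> cdual n = 0"
  by (rule vector_eq_ldot[THEN iffD1])
    (simp add: inner_commute orthogonal_compD[OF pinv_orthogonal_ker] flip: inner_pinv_cdual)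

lemma cdual_in_range: "cdual v \<in> R"
proof -
  have "cdual v \<in> R\<^sup>\<bottom>\<^sup>\<bottom>"
  proof (rule orthogonal_compI)
    fix s
    assume "s \<in> R\<^sup>\<bottom>"
    then have "pinv s = 0"
      using pinv_eq_0_iff by blast
    then show "inner s (cdual v) = 0"
      by (simp flip: inner_pinv_cdual)
  qed
  then show ?thesis
    by (simp add: ran.orthogonal_comp_orthogonal_comp)
qed

definition Dstar :: "'a set" where
  "Dstar = {y. \<exists>z. \<forall>x\<in>D. inner (T x) y = inner x z}"

definition Tstar :: "'a \<Rightarrow> 'a" where
  "Tstar y = (THE z. \<forall>x\<in>D. inner (T x) y = inner x z)"

lemma adj_op_eq: "adj_op (D, T) = (Dstar, Tstar)"
  by (simp add: adj_op_def dom_op_def app_op_def Dstar_def Tstar_def fun_eq_iff)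

lemma adjointI:
  assumes "\<And>x. x \<in> D \<Longrightarrow> inner (T x) y = inner x z"
  shows "y \<in> Dstar" and "Tstar y = z"
proof -
  show "y \<in> Dstar"
    using assms by (auto simp: Dstar_def)
  show "Tstar y = z"
    unfolding Tstar_def
  proof (rule the_equality)
    fix z'
    assume "\<forall>x\<in>D. inner (T x) y = inner x z'"
    then have "\<And>x. x \<in> D \<Longrightarrow> inner x (z' - z) = 0"
      using assms by (simp add: inner_diff_right)
    then show "z' = z"
      using orthogonal_to_dense_eq_0[OF dense_dom] by fastforce
  qed (use assms in blast)
qed

lemma adjointD: "y \<in> Dstar \<Longrightarrow> x \<in> D \<Longrightarrow> inner (T x) y = inner x (Tstar y)"
  using adjointI(2) by (fastforce simp: Dstar_def)

lemma Tstar_orthogonal_ker: "y \<in> Dstar \<Longrightarrow> Tstar y \<in> N\<^sup>\<bottom>"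
  using ker_subset_dom adjointD by (intro orthogonal_compI) (force simp: N_def)

lemma adjoint_cdual_add:
  assumes "v \<in> R\<^sup>\<bottom>"
  shows "cdual u + v \<in> Dstar" and "Tstar (cdual u + v) = u - orth_proj N u"
proof -
  have "inner (T x) (cdual u + v) = inner x (u - orth_proj N u)" if "x \<in> D" for x
  proof -
    have "inner (T x) v = 0"
      using assms T_in_range[OF that] orthogonal_compD by blast
    then have "inner (T x) (cdual u + v) = inner (pinv (T x)) u"
      by (simp add: inner_add_right inner_pinv_cdual)
    also have "\<dots> = inner x (u - orth_proj N u)"
      using that by (simp add: pinv_T ker.inner_diff_orth_proj)
    finally show ?thesis .
  qed
  then show "cdual u + v \<in> Dstar" "Tstar (cdual u + v) = u - orth_proj N u"
    by (blast intro: adjointI)+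
qed

lemma orthogonal_range_adjoint: "v \<in> R\<^sup>\<bottom> \<Longrightarrow> v \<in> Dstar \<and> Tstar v = 0"
  using adjoint_cdual_add[of v 0] linear_0[OF linear_cdual] ker.orth_proj_id[OF subspace_0[OF ker.subspace]]
  by simp

lemma cdual_adjoint: "cdual u \<in> Dstar" "Tstar (cdual u) = u - orth_proj N u"
  using adjoint_cdual_add[of 0 u] subspace_orthogonal_comp subspace_0 by auto

lemma adjoint_decomposition:
  assumes "y \<in> Dstar"
  shows "y = cdual (Tstar y) + (y - orth_proj R y)"
proof -
  define y' where "y' = cdual (Tstar y) + (y - orth_proj R y)"
  have "y' \<in> Dstar" and "Tstar y' = Tstar y"
    using adjoint_cdual_add[OF ran.orth_proj_orthogonal, of "Tstar y" y]
      ker.orth_proj_eq_0[OF Tstar_orthogonal_ker[OF assms]]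
    by (simp_all add: y'_def)
  have "y - y' \<in> R\<^sup>\<bottom>"
  proof (rule orthogonal_compI)
    fix s
    assume "s \<in> R"
    then obtain x where "x \<in> D" "s = T x"
      by (auto simp: R_def)
    then show "inner s (y - y') = 0"
      using adjointD[OF assms] adjointD[OF \<open>y' \<in> Dstar\<close>] \<open>Tstar y' = Tstar y\<close>
      by (simp add: inner_diff_right)
  qed
  moreover have "y - y' = orth_proj R y - cdual (Tstar y)"
    by (simp add: y'_def)
  then have "y - y' \<in> R"
    using ran.orth_proj_in cdual_in_range ran.subspace subspace_diff by metis
  ultimately show ?thesis
    using orthogonal_comp_self_eq_0 by (fastforce simp: y'_def)
qed

lemma zero_adjoint: "0 \<in> Dstar" "Tstar 0 = 0"
  using orthogonal_range_adjoint[OF subspace_0[OF subspace_orthogonal_comp]] by auto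

lemma normal_op_iff:
  "normal_op (D, T) \<longleftrightarrow> {x \<in> Dstar. Tstar x \<in> D} = {x \<in> D. T x \<in> Dstar}
     \<and> (\<forall>x. x \<in> D \<longrightarrow> T x \<in> Dstar \<longrightarrow> T (Tstar x) = Tstar (T x))"
  unfolding normal_op_def adj_op_eq op_eq_def comp_op_def dom_op_def app_op_def
  by auto

lemma orthogonal_ker_eq_range: "N = R\<^sup>\<bottom> \<Longrightarrow> N\<^sup>\<bottom> = R"
  using ran.orthogonal_comp_orthogonal_comp by simp

lemma orth_proj_ker_eq: "N = R\<^sup>\<bottom> \<Longrightarrow> orth_proj N u = u - orth_proj R u"
  using orthogonal_ker_eq_range ran.orth_proj_in ran.orth_proj_orthogonal
  by (intro ker.orth_proj_unique) simp_all

lemma normal_opD: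
  assumes "normal_op (D, T)"
  shows "x \<in> D \<Longrightarrow> T x \<in> Dstar \<Longrightarrow> x \<in> Dstar \<and> Tstar x \<in> D \<and> T (Tstar x) = Tstar (T x)"
    and "x \<in> Dstar \<Longrightarrow> Tstar x \<in> D \<Longrightarrow> x \<in> D \<and> T x \<in> Dstar \<and> T (Tstar x) = Tstar (T x)"
proof -
  have dom_eq: "{x \<in> Dstar. Tstar x \<in> D} = {x \<in> D. T x \<in> Dstar}"
    and val_eq: "\<And>x. x \<in> D \<Longrightarrow> T x \<in> Dstar \<Longrightarrow> T (Tstar x) = Tstar (T x)"
    using assms by (auto simp: normal_op_iff)
  show "x \<in> D \<Longrightarrow> T x \<in> Dstar \<Longrightarrow> x \<in> Dstar \<and> Tstar x \<in> D \<and> T (Tstar x) = Tstar (T x)"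
    using dom_eq val_eq by blast
  show "x \<in> Dstar \<Longrightarrow> Tstar x \<in> D \<Longrightarrow> x \<in> D \<and> T x \<in> Dstar \<and> T (Tstar x) = Tstar (T x)"
    using dom_eq val_eq by blast
qed

text \<open>For \<open>n \<in> N\<close>: \<open>\<parallel>T\<^sup>* n\<parallel>\<^sup>2 = \<langle>T T\<^sup>* n, n\<rangle> = \<langle>T\<^sup>* T n, n\<rangle> = 0\<close>, and symmetrically on \<open>R\<^sup>\<bottom>\<close>.\<close>

lemma normal_imp_ker_eq_orthogonal_range:
  assumes "normal_op (D, T)"
  shows "N = R\<^sup>\<bottom>"
proof
  show "N \<subseteq> R\<^sup>\<bottom>"
  proof
    fix n
    assume "n \<in> N"
    then have "n \<in> D" and "T n = 0"
      by (auto simp: N_def)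
    then have "n \<in> Dstar" and "Tstar n \<in> D" and "T (Tstar n) = 0"
      using normal_opD(1)[OF assms, of n] zero_adjoint by simp_all
    then have "inner (Tstar n) (Tstar n) = 0"
      using adjointD[OF \<open>n \<in> Dstar\<close> \<open>Tstar n \<in> D\<close>] by simp
    then have "\<And>x. x \<in> D \<Longrightarrow> inner (T x) n = 0"
      using adjointD[OF \<open>n \<in> Dstar\<close>] by simp
    then show "n \<in> R\<^sup>\<bottom>"
      by (intro orthogonal_compI) (auto simp: R_def)
  qed
  show "R\<^sup>\<bottom> \<subseteq> N"
  proof
    fix v
    assume "v \<in> R\<^sup>\<bottom>"
    then have "v \<in> Dstar" and "Tstar v = 0"
      using orthogonal_range_adjoint by auto
    then have "v \<in> D" and "T v \<in> Dstar" and "Tstar (T v) = 0"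
      using normal_opD(2)[OF assms, of v] zero_in_dom T_0 by simp_all
    then have "inner (T v) (T v) = 0"
      using adjointD[OF \<open>T v \<in> Dstar\<close> \<open>v \<in> D\<close>] by simp
    then show "v \<in> N"
      using \<open>v \<in> D\<close> by (simp add: N_def)
  qed
qed

lemma normal_imp_commute:
  assumes "normal_op (D, T)"
  shows "pinv (cdual w) = cdual (pinv w)"
proof -
  have NR: "N = R\<^sup>\<bottom>"
    using normal_imp_ker_eq_orthogonal_range[OF assms] .
  define x where "x = pinv (cdual w)"
  have "x \<in> D" and "x \<in> R"
    using pinv_in_dom pinv_orthogonal_ker orthogonal_ker_eq_range[OF NR] by (auto simp: x_def)
  have Tx: "T x = cdual w"
    using T_pinv ran.orth_proj_id[OF cdual_in_range] by (simp add: x_def)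
  then have "T x \<in> Dstar"
    using cdual_adjoint by simp
  then have "x \<in> Dstar" and "Tstar x \<in> D" and TTstar: "T (Tstar x) = Tstar (T x)"
    using normal_opD(1)[OF assms \<open>x \<in> D\<close>] by simp_all
  define u where "u = Tstar x"
  have "x = cdual u"
    using adjoint_decomposition[OF \<open>x \<in> Dstar\<close>] ran.orth_proj_id[OF \<open>x \<in> R\<close>] by (simp add: u_def)
  have "u = pinv (T u)"
    using pinv_T \<open>Tstar x \<in> D\<close> ker.orth_proj_eq_0[OF Tstar_orthogonal_ker[OF \<open>x \<in> Dstar\<close>]]
    by (simp add: u_def)
  also have "T u = orth_proj R w"
    using TTstar Tx cdual_adjoint orth_proj_ker_eq[OF NR] by (simp add: u_def)
  finally have "u = pinv w"
    by (simp add: pinv_orth_proj_range)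
  then show ?thesis
    using \<open>x = cdual u\<close> by (simp add: x_def)
qed

lemma commute_imp_ker_eq_orthogonal_range:
  assumes commute: "\<And>w. pinv (cdual w) = cdual (pinv w)"
  shows "N = R\<^sup>\<bottom>"
proof
  show "R\<^sup>\<bottom> \<subseteq> N"
  proof
    fix x
    assume "x \<in> R\<^sup>\<bottom>"
    then have "pinv x = 0"
      using pinv_eq_0_iff by blast
    then have "pinv (cdual x) = 0"
      using commute linear_0[OF linear_cdual] by simp
    then have "cdual x = 0"
      using pinv_eq_0_iff cdual_in_range orthogonal_comp_self_eq_0 by blast
    then have "x = orth_proj N x"
      using cdual_adjoint(2)[of x] zero_adjoint by simp
    then show "x \<in> N"
      using ker.orth_proj_in by metis
  qed
  show "N \<subseteq> R\<^sup>\<bottom>"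
  proof
    fix x
    assume "x \<in> N"
    then have "cdual (pinv x) = 0"
      using commute[of x] cdual_ker linear_0[OF linear_pinv] by simp
    then have "pinv x = 0"
      using cdual_adjoint(2)[of "pinv x"] zero_adjoint ker.orth_proj_eq_0[OF pinv_orthogonal_ker] by simp
    then show "x \<in> R\<^sup>\<bottom>"
      using pinv_eq_0_iff by blast
  qed
qed

lemma commute_imp_TstarT_le_TTstar:
  assumes commute: "\<And>w. pinv (cdual w) = cdual (pinv w)" and "x \<in> D" and "T x \<in> Dstar"
  shows "x \<in> Dstar" and "Tstar x \<in> D" and "T (Tstar x) = Tstar (T x)"
proof -
  have NR: "N = R\<^sup>\<bottom>"
    using commute_imp_ker_eq_orthogonal_range[OF commute] .
  define u where "u = Tstar (T x)"
  have "u \<in> R"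
    using Tstar_orthogonal_ker[OF \<open>T x \<in> Dstar\<close>] orthogonal_ker_eq_range[OF NR]
    by (simp add: u_def)
  have "T x = cdual u"
    using adjoint_decomposition[OF \<open>T x \<in> Dstar\<close>] ran.orth_proj_id[OF T_in_range[OF \<open>x \<in> D\<close>]]
    by (simp add: u_def)
  then have "x - orth_proj N x = cdual (pinv u)"
    using pinv_T[OF \<open>x \<in> D\<close>] commute[of u] by simp
  then have "x = cdual (pinv u) + orth_proj N x"
    by (simp add: diff_eq_eq)
  moreover have "orth_proj N x \<in> R\<^sup>\<bottom>"
    using ker.orth_proj_in NR by simp
  ultimately have "x \<in> Dstar" and "Tstar x = pinv u"
    using adjoint_cdual_add[of "orth_proj N x" "pinv u"] ker.orth_proj_eq_0[OF pinv_orthogonal_ker]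
    by simp_all
  moreover have "T (pinv u) = u"
    using T_pinv ran.orth_proj_id[OF \<open>u \<in> R\<close>] by simp
  ultimately show "x \<in> Dstar" and "Tstar x \<in> D" and "T (Tstar x) = Tstar (T x)"
    using pinv_in_dom by (simp_all add: u_def)
qed

lemma commute_imp_dom_TTstar_subset:
  assumes commute: "\<And>w. pinv (cdual w) = cdual (pinv w)" and "x \<in> Dstar" and "Tstar x \<in> D"
  shows "x \<in> D" and "T x \<in> Dstar"
proof -
  define s where "s = T (Tstar x)"
  define r where "r = x - orth_proj R x"
  have "Tstar x = pinv s"
    using pinv_T[OF \<open>Tstar x \<in> D\<close>] ker.orth_proj_eq_0[OF Tstar_orthogonal_ker[OF \<open>x \<in> Dstar\<close>]]
    by (simp add: s_def)
  then have x_eq: "x = pinv (cdual s) + r"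
    using adjoint_decomposition[OF \<open>x \<in> Dstar\<close>] commute by (simp add: r_def)
  have "r \<in> N"
    using ran.orth_proj_orthogonal commute_imp_ker_eq_orthogonal_range[OF commute] by (simp add: r_def)
  then have "r \<in> D" and "T r = 0"
    by (auto simp: N_def)
  then have "x \<in> D" and "T x = cdual s"
    using add_in_dom[OF pinv_in_dom] add[OF pinv_in_dom] T_pinv ran.orth_proj_id[OF cdual_in_range]
    by (simp_all add: x_eq)
  then show "x \<in> D" and "T x \<in> Dstar"
    using cdual_adjoint by simp_all
qed

lemma commute_imp_normal:
  assumes "\<And>w. pinv (cdual w) = cdual (pinv w)"
  shows "normal_op (D, T)"
  unfolding normal_op_iff
  using commute_imp_TstarT_le_TTstar[OF assms] commute_imp_dom_TTstar_subset[OF assms] by blast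

lemma normal_iff_commute: "normal_op (D, T) \<longleftrightarrow> (\<forall>w. pinv (cdual w) = cdual (pinv w))"
  using normal_imp_commute commute_imp_normal by blast

section \<open>The generalized Cauchy dual\<close>

lemma adjoint_comp_simps:
  "dom_op (comp_op (Dstar, Tstar) (D, T)) = {x \<in> D. T x \<in> Dstar}"
  "app_op (comp_op (Dstar, Tstar) (D, T)) = (\<lambda>x. Tstar (T x))"
  by (simp_all add: comp_op_def dom_op_def app_op_def)

lemma pinv_cdual_adjoint_comp:
  "pinv (cdual y) \<in> D" "T (pinv (cdual y)) \<in> Dstar" "Tstar (T (pinv (cdual y))) = y - orth_proj N y"
  using pinv_in_dom T_pinv ran.orth_proj_id[OF cdual_in_range] cdual_adjoint by simp_all

lemma range_adjoint_comp: "range_op (comp_op (Dstar, Tstar) (D, T)) = N\<^sup>\<bottom>"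
proof
  show "range_op (comp_op (Dstar, Tstar) (D, T)) \<subseteq> N\<^sup>\<bottom>"
    using Tstar_orthogonal_ker by (auto simp: range_op_def adjoint_comp_simps)
  show "N\<^sup>\<bottom> \<subseteq> range_op (comp_op (Dstar, Tstar) (D, T))"
  proof
    fix m
    assume "m \<in> N\<^sup>\<bottom>"
    then have "Tstar (T (pinv (cdual m))) = m"
      using pinv_cdual_adjoint_comp(3) ker.orth_proj_eq_0 by simp
    then show "m \<in> range_op (comp_op (Dstar, Tstar) (D, T))"
      using pinv_cdual_adjoint_comp(1,2) unfolding range_op_def adjoint_comp_simps
      by (intro image_eqI[of _ _ "pinv (cdual m)"]) simp_all
  qed
qed

lemma ker_adjoint_comp: "ker_op (comp_op (Dstar, Tstar) (D, T)) = N"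
proof
  show "ker_op (comp_op (Dstar, Tstar) (D, T)) \<subseteq> N"
  proof
    fix x
    assume "x \<in> ker_op (comp_op (Dstar, Tstar) (D, T))"
    then have "x \<in> D" "T x \<in> Dstar" "Tstar (T x) = 0"
      by (auto simp: ker_op_def adjoint_comp_simps)
    then have "inner (T x) (T x) = 0"
      using adjointD[of "T x" x] by simp
    then show "x \<in> N"
      using \<open>x \<in> D\<close> by (simp add: N_def)
  qed
  show "N \<subseteq> ker_op (comp_op (Dstar, Tstar) (D, T))"
    using zero_adjoint by (auto simp: ker_op_def adjoint_comp_simps N_def)
qed

lemma mp_inv_adjoint_comp: "mp_inv (comp_op (Dstar, Tstar) (D, T)) = (UNIV, \<lambda>y. pinv (cdual y))"
proof -
  let ?A = "comp_op (Dstar, Tstar) (D, T)"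
  have "y \<in> {u + v | u v. u \<in> N\<^sup>\<bottom> \<and> v \<in> N}" for y
  proof -
    have "y = (y - orth_proj N y) + orth_proj N y"
      by simp
    then show ?thesis
      using ker.orth_proj_in ker.orth_proj_orthogonal by blast
  qed
  then have dom: "dom_op (mp_inv ?A) = UNIV"
    by (auto simp: mp_inv_def dom_op_def range_adjoint_comp ker.orthogonal_comp_orthogonal_comp)
  have "(THE x. x \<in> coker_dom ?A \<and> (\<exists>u v. y = u + v \<and> u \<in> N\<^sup>\<bottom> \<and> v \<in> N \<and> app_op ?A x = u))
      = pinv (cdual y)" for y
  proof (rule the_equality)
    have "y = (y - orth_proj N y) + orth_proj N y"
      by simp
    then show "pinv (cdual y) \<in> coker_dom ?A \<and>
        (\<exists>u v. y = u + v \<and> u \<in> N\<^sup>\<bottom> \<and> v \<in> N \<and> app_op ?A (pinv (cdual y)) = u)"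
      using pinv_cdual_adjoint_comp pinv_orthogonal_ker ker.orth_proj_in ker.orth_proj_orthogonal
      by (auto simp: coker_dom_def adjoint_comp_simps ker_adjoint_comp)
  next
    fix x
    assume "x \<in> coker_dom ?A \<and> (\<exists>u v. y = u + v \<and> u \<in> N\<^sup>\<bottom> \<and> v \<in> N \<and> app_op ?A x = u)"
    then obtain u v where x: "x \<in> D" "T x \<in> Dstar" "x \<in> N\<^sup>\<bottom>"
      and uv: "y = u + v" "v \<in> N" and u: "Tstar (T x) = u"
      by (auto simp: coker_dom_def adjoint_comp_simps ker_adjoint_comp)
    have "x = pinv (T x)"
      using pinv_T[OF x(1)] ker.orth_proj_eq_0[OF x(3)] by simp
    also have "T x = cdual u"
      using adjoint_decomposition[OF x(2)] ran.orth_proj_id[OF T_in_range[OF x(1)]] u by simp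
    also have "cdual u = cdual y"
      using uv cdual_ker linear_add[OF linear_cdual] by simp
    finally show "x = pinv (cdual y)" .
  qed
  then have "app_op (mp_inv ?A) = (\<lambda>y. pinv (cdual y))"
    by (simp add: mp_inv_def app_op_def range_adjoint_comp ker.orthogonal_comp_orthogonal_comp fun_eq_iff)
  with dom show ?thesis
    by (simp add: dom_op_def app_op_def prod_eq_iff)
qed

lemma cauchy_dual_eq: "cauchy_dual (D, T) = (UNIV, cdual)"
proof -
  have "cauchy_dual (D, T) = comp_op (D, T) (UNIV, \<lambda>y. pinv (cdual y))"
    by (simp add: cauchy_dual_def adj_op_eq mp_inv_adjoint_comp)
  also have "\<dots> = (UNIV, cdual)"
    using pinv_in_dom T_pinv ran.orth_proj_id[OF cdual_in_range]
    by (simp add: comp_op_def dom_op_def app_op_def)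
  finally show ?thesis .
qed

lemma adj_op_cdual: "adj_op (UNIV, cdual) = (UNIV, pinv)"
proof -
  have adjoint: "inner (cdual x) y = inner x (pinv y)" for x y
    using inner_pinv_cdual[of y x] by (simp add: inner_commute)
  have "(THE z. \<forall>x. inner (cdual x) y = inner x z) = pinv y" for y
    by (rule the_equality) (simp_all add: adjoint vector_eq_ldot)
  then show ?thesis
    by (auto simp: adj_op_def dom_op_def app_op_def adjoint fun_eq_iff)
qed

lemma normal_cauchy_dual_iff: "normal_op (cauchy_dual (D, T)) \<longleftrightarrow> (\<forall>w. pinv (cdual w) = cdual (pinv w))"
  by (auto simp: cauchy_dual_eq adj_op_cdual normal_op_def op_eq_def comp_op_def dom_op_def app_op_def)

end

lemma closed_range_operatorI:
  assumes "clinear_op J A" and "densely_defined A" and "closed_op A" and "closed (range_op A)"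
  shows "closed_range_operator (dom_op A) (app_op A)"
  using assms
  by unfold_locales (simp_all add: clinear_op_def densely_defined_def closed_op_def graph_op_def range_op_def)

theorem theorem2p4:
  fixes J :: "'a::{real_inner, complete_space} \<Rightarrow> 'a"
    and T :: "'a op"
  assumes "complex_structure J"
    and "clinear_op J T"
    and "densely_defined T"
    and "closed_op T"
    and "closed (range_op T)"
  shows "normal_op T \<longleftrightarrow> normal_op (cauchy_dual T)"
proof -
  obtain D f where T_eq: "T = (D, f)"
    by fastforce
  interpret closed_range_operator D f
    using closed_range_operatorI[OF assms(2-5)] by (simp add: T_eq dom_op_def app_op_def)
  show ?thesis
    by (simp add: T_eq normal_iff_commute normal_cauchy_dual_iff)
qed

end
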